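(* Let $(X_n)$ be i.i.d. non-lattice real random variables distributed as $X$ with $\mathbb{P}(X<0)>0$, and let $(Y_n)$ be i.i.d., independent of $(X_n)$, with $\mathbb{P}(Y_1=1)=p=1-\mathbb{P}(Y_1=-1)$, $p\in[0,1)$. Assume $X\in\mathcal{S}(\gamma)$ for some $\gamma>0$ and $\mathbb{E}[e^{\gamma X}]<1/p$. Let $W$ have the stationary distribution of $W_{n+1}=(Y_nW_n+X_n)^+$, i.e. $W\stackrel{D}{=}(YW+X)^+$ with $W,Y,X$ independent. Let $S_0=0$, $S_n=X_1+\dots+X_n$, and let $N$ be independent of everything with $\mathbb{P}(N=k)=(1-p)p^k$, $k\ge0$. Then for all $x$, with $X,W,S_N$ independent, \[\mathbb{P}(W>x)=\mathbb{P}(S_N>x)+\frac{p}{1-p}\,\mathbb{P}(X+W+S_N\le x;\,S_N>x)+\mathbb{P}(X-W+S_N>x;\,S_N\le x).\]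
   Context: $X\in\mathcal{S}(\gamma)$ means: $\mathbb{P}(X>x+y)/\mathbb{P}(X>x)\to e^{-\gamma y}$ as $x\to\infty$ for each fixed $y$, and $\mathbb{P}(X_1+X_2>x)\sim 2\mathbb{E}[e^{\gamma X}]\mathbb{P}(X>x)$ for independent copies $X_1,X_2$ of $X$. *)

theory Defs
  imports "HOL-Probability.Probability" "HOL-Library.Landau_Symbols"
begin

definition tail :: "real measure \<Rightarrow> real \<Rightarrow> real" where
  "tail \<mu> x = measure \<mu> {x<..}"

text \<open>The moment E[exp(gamma X)]
  is required to be finite (implicit in the asymptotic relation).  The law of
  X1 + X2 for independent copies is the convolution mu * mu.\<close>
definition class_S :: "real \<Rightarrow> real measure \<Rightarrow> bool" where
  "class_S \<gamma> \<mu> \<longleftrightarrow>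
     (\<forall>y. ((\<lambda>x. tail \<mu> (x + y) / tail \<mu> x) \<longlongrightarrow> exp (- \<gamma> * y)) at_top) \<and>
     integrable \<mu> (\<lambda>t. exp (\<gamma> * t)) \<and>
     (\<lambda>x. tail (\<mu> \<star> \<mu>) x) \<sim>[at_top]
        (\<lambda>x. 2 * (\<integral>t. exp (\<gamma> * t) \<partial>\<mu>) * tail \<mu> x)"

definition lattice_distr :: "real measure \<Rightarrow> bool" where
  "lattice_distr \<mu> \<longleftrightarrow>
     (\<exists>a d. d > 0 \<and> measure \<mu> {a + d * of_int k | k. True} = 1)"

text \<open>Index type for the family of random variables that are assumed
  mutually independent: X_n (n >= 0), Y, W and N.\<close>
datatype rv_idx = Xi nat | Yi | Wi | Ni

definition rv_family ::
  "(nat \<Rightarrow> 'a \<Rightarrow> real) \<Rightarrow> ('a \<Rightarrow> real) \<Rightarrow> ('a \<Rightarrow> real) \<Rightarrow> ('a \<Rightarrow> nat) \<Rightarrow> rv_idx \<Rightarrow> 'a \<Rightarrow> real" where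
  "rv_family X Y W N i = (case i of Xi n \<Rightarrow> X n | Yi \<Rightarrow> Y | Wi \<Rightarrow> W | Ni \<Rightarrow> (\<lambda>\<omega>. real (N \<omega>)))"

end

theory Submission
  imports Defs
begin

text \<open>
  Put \<open>g(y) = P(W > y)\<close>. Splitting the stationary equation \<open>W = (YW + X)\<^sup>+\<close> according to the
  sign of \<open>Y\<close> gives a defective renewal equation \<open>g(y) = p E g(y - X) + h(y)\<close>, where \<open>h\<close>
  collects the contribution of \<open>Y = -1\<close> and the correction for the positive part when \<open>y < 0\<close>.
  Iterating it along the random walk \<open>S\<^sub>k\<close> and letting the remainder \<open>p\<^sup>n E g(x - S\<^sub>n) \<le> p\<^sup>n\<close> vanish
  yields \<open>g(x) = \<Sum>\<^sub>k p\<^sup>k E h(x - S\<^sub>k)\<close>. Each of the three pieces of \<open>h\<close> is a probability for an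
  independent copy of \<open>X \<plusminus> W\<close> shifted by \<open>S\<^sub>k\<close>, and the weights \<open>(1 - p) p\<^sup>k\<close> are exactly the law of
  the geometric index \<open>N\<close>, which turns the series into probabilities for \<open>S\<^sub>N\<close>.
\<close>

lemma (in prob_space) indep_var_compose_restrict:
  assumes "indep_vars M' F I" "A \<inter> B = {}" "A \<subseteq> I" "B \<subseteq> I"
    and "f \<in> measurable (PiM A M') N1" "g \<in> measurable (PiM B M') N2"
  shows "indep_var N1 (\<lambda>\<omega>. f (\<lambda>i\<in>A. F i \<omega>)) N2 (\<lambda>\<omega>. g (\<lambda>i\<in>B. F i \<omega>))"
  using indep_var_compose[OF indep_var_restrict[OF assms(1-4)] assms(5,6)] by (simp add: o_def)

lemma nn_integral_of_bool:
  assumes "{\<omega>\<in>space M. P \<omega>} \<in> sets M"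
  shows "(\<integral>\<^sup>+\<omega>. of_bool (P \<omega>) \<partial>M) = emeasure M {\<omega>\<in>space M. P \<omega>}"
proof -
  have "(\<integral>\<^sup>+\<omega>. of_bool (P \<omega>) \<partial>M) = (\<integral>\<^sup>+\<omega>. indicator {\<omega>\<in>space M. P \<omega>} \<omega> \<partial>M)"
    by (intro nn_integral_cong) (auto simp: indicator_def)
  with assms show ?thesis by simp
qed

lemma (in prob_space) nn_integral_indep_var:
  assumes "indep_var Ma A Mb B"
    and f[measurable]: "case_prod f \<in> borel_measurable (Ma \<Otimes>\<^sub>M Mb)"
  shows "(\<integral>\<^sup>+\<omega>. f (A \<omega>) (B \<omega>) \<partial>M) = (\<integral>\<^sup>+\<omega>. (\<integral>\<^sup>+\<omega>'. f (A \<omega>') (B \<omega>) \<partial>M) \<partial>M)"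
proof -
  have [measurable]: "A \<in> measurable M Ma" "B \<in> measurable M Mb"
    and joint: "distr M Ma A \<Otimes>\<^sub>M distr M Mb B = distr M (Ma \<Otimes>\<^sub>M Mb) (\<lambda>\<omega>. (A \<omega>, B \<omega>))"
    using assms(1) unfolding indep_var_distribution_eq by auto
  interpret DA: prob_space "distr M Ma A" by (rule prob_space_distr) simp
  interpret DB: prob_space "distr M Mb B" by (rule prob_space_distr) simp
  interpret pair_sigma_finite "distr M Ma A" "distr M Mb B" ..
  have "(\<integral>\<^sup>+\<omega>. f (A \<omega>) (B \<omega>) \<partial>M) = (\<integral>\<^sup>+z. case_prod f z \<partial>(distr M Ma A \<Otimes>\<^sub>M distr M Mb B))"
    by (simp add: joint nn_integral_distr)
  also have "\<dots> = (\<integral>\<^sup>+b. (\<integral>\<^sup>+a. f a b \<partial>distr M Ma A) \<partial>distr M Mb B)"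
    by (subst nn_integral_snd[symmetric]) auto
  also have "\<dots> = (\<integral>\<^sup>+b. (\<integral>\<^sup>+\<omega>'. f (A \<omega>') b \<partial>M) \<partial>distr M Mb B)"
    by (intro nn_integral_cong) (simp add: nn_integral_distr)
  also have "\<dots> = (\<integral>\<^sup>+\<omega>. (\<integral>\<^sup>+\<omega>'. f (A \<omega>') (B \<omega>) \<partial>M) \<partial>M)"
    by (simp add: nn_integral_distr)
  finally show ?thesis .
qed

lemma (in prob_space) emeasure_indep_var:
  assumes "indep_var Ma A Mb B" and P[measurable]: "Measurable.pred (Ma \<Otimes>\<^sub>M Mb) (\<lambda>(u, v). P u v)"
  shows "emeasure M {\<omega>\<in>space M. P (A \<omega>) (B \<omega>)} =
    (\<integral>\<^sup>+\<omega>. emeasure M {\<omega>'\<in>space M. P (A \<omega>') (B \<omega>)} \<partial>M)"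
proof -
  have [measurable]: "A \<in> measurable M Ma" "B \<in> measurable M Mb"
    using assms(1) by (auto dest: indep_var_rv1 indep_var_rv2)
  have "emeasure M {\<omega>\<in>space M. P (A \<omega>) (B \<omega>)} = (\<integral>\<^sup>+\<omega>. of_bool (P (A \<omega>) (B \<omega>)) \<partial>M)"
    by (rule nn_integral_of_bool[symmetric]) measurable
  also have "\<dots> = (\<integral>\<^sup>+\<omega>. (\<integral>\<^sup>+\<omega>'. of_bool (P (A \<omega>') (B \<omega>)) \<partial>M) \<partial>M)"
    by (rule nn_integral_indep_var[OF assms(1)]) measurable
  also have "\<dots> = (\<integral>\<^sup>+\<omega>. emeasure M {\<omega>'\<in>space M. P (A \<omega>') (B \<omega>)} \<partial>M)"
    by (intro nn_integral_cong nn_integral_of_bool) measurable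
  finally show ?thesis .
qed

lemma ennreal_eq_geometric_series:
  fixes Q R :: "nat \<Rightarrow> ennreal" and c :: real
  assumes step: "\<And>k. Q k = ennreal c * Q (Suc k) + R k"
    and bounded: "\<And>k. Q k \<le> B" "B \<noteq> \<infinity>" and c: "0 \<le> c" "c < 1"
  shows "Q 0 = (\<Sum>k. ennreal c ^ k * R k)"
proof -
  have unfold: "Q 0 = (\<Sum>k<n. ennreal c ^ k * R k) + ennreal c ^ n * Q n" for n
  proof (induction n)
    case (Suc n)
    then show ?case by (simp add: step[of n] algebra_simps)
  qed simp
  obtain b where b: "B = ennreal b" "0 \<le> b" using bounded(2) by (cases B) auto
  have "(\<lambda>n. ennreal c ^ n * Q n) \<longlonglongrightarrow> 0"
  proof (rule tendsto_sandwich[of "\<lambda>_. 0" _ _ "\<lambda>n. ennreal (c ^ n * b)"])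
    show "\<forall>\<^sub>F n in sequentially. ennreal c ^ n * Q n \<le> ennreal (c ^ n * b)"
      using bounded(1) c b by (auto intro!: always_eventually mult_left_mono simp: ennreal_mult ennreal_power)
    have "(\<lambda>n. ennreal (c ^ n * b)) \<longlonglongrightarrow> ennreal (0 * b)"
      by (intro tendsto_ennrealI tendsto_mult LIMSEQ_realpow_zero tendsto_const) (use c in auto)
    then show "(\<lambda>n. ennreal (c ^ n * b)) \<longlonglongrightarrow> 0" by simp
  qed auto
  then have "(\<lambda>n. (\<Sum>k<n. ennreal c ^ k * R k) + ennreal c ^ n * Q n) \<longlonglongrightarrow> (\<Sum>k. ennreal c ^ k * R k) + 0"
    by (intro tendsto_add summable_LIMSEQ summableI)
  then show ?thesis
    unfolding unfold[symmetric] by (simp add: LIMSEQ_const_iff)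
qed

lemma ennreal_geometric_weights:
  fixes a b c :: ennreal and p :: real
  assumes "0 \<le> p" "p < 1"
  shows "ennreal p ^ k * (ennreal (1 - p) * a + ennreal p * b + ennreal (1 - p) * c) =
    ennreal ((1 - p) * p ^ k) * a + ennreal (p / (1 - p)) * (ennreal ((1 - p) * p ^ k) * b)
      + ennreal ((1 - p) * p ^ k) * c"
proof -
  have "ennreal p ^ k * ennreal (1 - p) = ennreal ((1 - p) * p ^ k)"
    using assms by (simp add: ennreal_power ennreal_mult'' mult.commute)
  moreover have "p ^ k * p = p / (1 - p) * ((1 - p) * p ^ k)"
    using assms by (simp add: field_simps)
  then have "ennreal p ^ k * ennreal p = ennreal (p / (1 - p)) * ennreal ((1 - p) * p ^ k)"
    using assms by (simp add: ennreal_power ennreal_mult''[symmetric])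
  ultimately show ?thesis
    by (simp only: distrib_left mult.assoc[symmetric])
qed

lemma emeasure_random_index:
  fixes N :: "'a \<Rightarrow> nat" and P :: "nat \<Rightarrow> 'a \<Rightarrow> bool"
  assumes "\<And>k. {\<omega>\<in>space M. N \<omega> = k \<and> P k \<omega>} \<in> sets M"
  shows "emeasure M {\<omega>\<in>space M. P (N \<omega>) \<omega>} = (\<Sum>k. emeasure M {\<omega>\<in>space M. N \<omega> = k \<and> P k \<omega>})"
proof -
  have "emeasure M {\<omega>\<in>space M. P (N \<omega>) \<omega>} = emeasure M (\<Union>k. {\<omega>\<in>space M. N \<omega> = k \<and> P k \<omega>})"
    by (auto intro!: arg_cong[where f="emeasure M"])
  also have "\<dots> = (\<Sum>k. emeasure M {\<omega>\<in>space M. N \<omega> = k \<and> P k \<omega>})"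
    by (rule suminf_emeasure[symmetric]) (use assms in \<open>auto simp: disjoint_family_on_def\<close>)
  finally show ?thesis .
qed

text \<open>
  \<open>X 0\<close> plays the role of the generic \<open>X\<close> that is independent of \<open>W\<close>, \<open>Y\<close> and \<open>S\<^sub>N\<close>,
  while \<open>X 1, X 2, \<dots>\<close> build the random walk \<open>S\<^sub>k\<close>.
\<close>

locale stationary_signed_lindley = prob_space M
  for M :: "'a measure" and X :: "nat \<Rightarrow> 'a \<Rightarrow> real" and Y W :: "'a \<Rightarrow> real"
    and N :: "'a \<Rightarrow> nat" and p :: real +
  assumes indep: "indep_vars (\<lambda>_. borel) (rv_family X Y W N) UNIV"
    and ident: "\<And>n. distr M borel (X n) = distr M borel (X 0)"
    and p: "0 \<le> p" "p < 1"
    and Y1: "prob {\<omega> \<in> space M. Y \<omega> = 1} = p"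
    and Ym1: "prob {\<omega> \<in> space M. Y \<omega> = -1} = 1 - p"
    and stat: "distr M borel W = distr M borel (\<lambda>\<omega>. max 0 (Y \<omega> * W \<omega> + X 0 \<omega>))"
    and Ngeo: "\<And>k. prob {\<omega> \<in> space M. N \<omega> = k} = (1 - p) * p ^ k"
begin

lemma random_variables [measurable]:
  "X n \<in> borel_measurable M" "Y \<in> borel_measurable M" "W \<in> borel_measurable M"
  "(\<lambda>\<omega>. real (N \<omega>)) \<in> borel_measurable M"
proof -
  have "rv_family X Y W N i \<in> borel_measurable M" for i
    using indep unfolding indep_vars_def by auto
  from this[of "Xi n"] this[of Yi] this[of Wi] this[of Ni] show
    "X n \<in> borel_measurable M" "Y \<in> borel_measurable M" "W \<in> borel_measurable M"
    "(\<lambda>\<omega>. real (N \<omega>)) \<in> borel_measurable M"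
    by (simp_all add: rv_family_def)
qed

definition partial_sum :: "nat \<Rightarrow> 'a \<Rightarrow> real" where
  "partial_sum k \<omega> = (\<Sum>i\<in>{1..k}. X i \<omega>)"

lemma measurable_partial_sum [measurable]: "partial_sum k \<in> borel_measurable M"
  unfolding partial_sum_def by measurable

lemma partial_sum_Suc: "partial_sum (Suc k) \<omega> = partial_sum k \<omega> + X (Suc k) \<omega>"
  by (simp add: partial_sum_def)

lemma indep_compose:
  assumes "A \<inter> B = {}" "f \<in> borel_measurable (PiM A (\<lambda>_. borel))" "g \<in> borel_measurable (PiM B (\<lambda>_. borel))"
  shows "indep_var borel (\<lambda>\<omega>. f (\<lambda>i\<in>A. rv_family X Y W N i \<omega>)) borel (\<lambda>\<omega>. g (\<lambda>i\<in>B. rv_family X Y W N i \<omega>))"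
  using indep_var_compose_restrict[OF indep assms(1) _ _ assms(2,3)] by simp

lemma indep_W_X0: "indep_var borel W borel (X 0)"
  using indep_compose[of "{Wi}" "{Xi 0}" "\<lambda>h. h Wi" "\<lambda>h. h (Xi 0)"] by (simp add: rv_family_def)

lemma indep_Y:
  assumes [measurable]: "case_prod f \<in> borel_measurable (borel \<Otimes>\<^sub>M borel)"
  shows "indep_var borel Y borel (\<lambda>\<omega>. f (W \<omega>) (X 0 \<omega>))"
  using indep_compose[of "{Yi}" "{Wi, Xi 0}" "\<lambda>h. h Yi" "\<lambda>h. f (h Wi) (h (Xi 0))"]
  by (simp add: rv_family_def)

lemma indep_X_partial_sum: "indep_var borel (X (Suc k)) borel (partial_sum k)"
  using indep_compose[of "{Xi (Suc k)}" "Xi ` {1..k}" "\<lambda>h. h (Xi (Suc k))" "\<lambda>h. \<Sum>i\<in>{1..k}. h (Xi i)"]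
  by (auto simp: rv_family_def partial_sum_def[abs_def] image_iff)

lemma indep_partial_sum:
  assumes [measurable]: "case_prod f \<in> borel_measurable (borel \<Otimes>\<^sub>M borel)"
  shows "indep_var borel (\<lambda>\<omega>. f (X 0 \<omega>) (W \<omega>)) borel (partial_sum k)"
  using indep_compose[of "{Xi 0, Wi}" "Xi ` {1..k}" "\<lambda>h. f (h (Xi 0)) (h Wi)" "\<lambda>h. \<Sum>i\<in>{1..k}. h (Xi i)"]
  by (auto simp: rv_family_def partial_sum_def[abs_def] image_iff)

lemma indep_N:
  assumes [measurable]: "(\<lambda>(u, v, s). f u v s) \<in> borel_measurable (borel \<Otimes>\<^sub>M borel \<Otimes>\<^sub>M borel)"
  shows "indep_var borel (\<lambda>\<omega>. real (N \<omega>)) borel (\<lambda>\<omega>. f (X 0 \<omega>) (W \<omega>) (partial_sum k \<omega>))"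
proof -
  have "(\<lambda>h. (\<lambda>(u, v, s). f u v s) (h (Xi 0), h Wi, \<Sum>i\<in>{1..k}. h (Xi i)))
      \<in> borel_measurable (PiM (insert (Xi 0) (insert Wi (Xi ` {1..k}))) (\<lambda>_. borel))"
    by measurable
  from indep_compose[of "{Ni}" _ "\<lambda>h. h Ni", OF _ _ this] show ?thesis
    by (auto simp: rv_family_def partial_sum_def[abs_def] image_iff)
qed

lemma emeasure_N_and:
  assumes P[measurable]: "Measurable.pred (borel \<Otimes>\<^sub>M borel \<Otimes>\<^sub>M borel) (\<lambda>(u, v, s). P u v s)"
  shows "emeasure M {\<omega>\<in>space M. N \<omega> = k \<and> P (X 0 \<omega>) (W \<omega>) (partial_sum k \<omega>)} =
    ennreal ((1 - p) * p ^ k) * emeasure M {\<omega>\<in>space M. P (X 0 \<omega>) (W \<omega>) (partial_sum k \<omega>)}"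
proof -
  let ?E = "\<lambda>\<omega>. P (X 0 \<omega>) (W \<omega>) (partial_sum k \<omega>)"
  have "(\<lambda>z. of_bool ((\<lambda>(u, v, s). P u v s) z) :: real) \<in> borel_measurable (borel \<Otimes>\<^sub>M borel \<Otimes>\<^sub>M borel)"
    by measurable
  then have "(\<lambda>(u, v, s). of_bool (P u v s) :: real) \<in> borel_measurable (borel \<Otimes>\<^sub>M borel \<Otimes>\<^sub>M borel)"
    by (simp add: case_prod_beta')
  then have "indep_var borel (\<lambda>\<omega>. real (N \<omega>)) borel (\<lambda>\<omega>. of_bool (?E \<omega>))"
    by (rule indep_N)
  then have "\<P>(\<omega> in M. real (N \<omega>) \<in> {real k} \<and> of_bool (?E \<omega>) \<in> {1::real}) =
      \<P>(\<omega> in M. real (N \<omega>) \<in> {real k}) * \<P>(\<omega> in M. of_bool (?E \<omega>) \<in> {1::real})"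
    by (rule prob_indep_random_variable) auto
  moreover have "{\<omega>\<in>space M. real (N \<omega>) \<in> {real k} \<and> of_bool (?E \<omega>) \<in> {1::real}} =
      {\<omega>\<in>space M. N \<omega> = k \<and> ?E \<omega>}" "{\<omega>\<in>space M. real (N \<omega>) \<in> {real k}} = {\<omega>\<in>space M. N \<omega> = k}"
    "{\<omega>\<in>space M. of_bool (?E \<omega>) \<in> {1::real}} = {\<omega>\<in>space M. ?E \<omega>}"
    by auto
  ultimately show ?thesis
    using p by (simp add: emeasure_eq_measure Ngeo ennreal_mult'')
qed

lemma emeasure_at_N:
  assumes P[measurable]: "Measurable.pred (borel \<Otimes>\<^sub>M borel \<Otimes>\<^sub>M borel) (\<lambda>(u, v, s). P u v s)"
  shows "emeasure M {\<omega>\<in>space M. P (X 0 \<omega>) (W \<omega>) (partial_sum (N \<omega>) \<omega>)} =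
    (\<Sum>k. ennreal ((1 - p) * p ^ k) * emeasure M {\<omega>\<in>space M. P (X 0 \<omega>) (W \<omega>) (partial_sum k \<omega>)})"
proof -
  have "Measurable.pred M (\<lambda>\<omega>. real (N \<omega>) = real k \<and> (\<lambda>(u, v, s). P u v s) (X 0 \<omega>, W \<omega>, partial_sum k \<omega>))" for k
    by measurable
  then have "{\<omega>\<in>space M. N \<omega> = k \<and> P (X 0 \<omega>) (W \<omega>) (partial_sum k \<omega>)} \<in> events" for k
    by simp
  then have "emeasure M {\<omega>\<in>space M. P (X 0 \<omega>) (W \<omega>) (partial_sum (N \<omega>) \<omega>)} =
      (\<Sum>k. emeasure M {\<omega>\<in>space M. N \<omega> = k \<and> P (X 0 \<omega>) (W \<omega>) (partial_sum k \<omega>)})"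
    by (rule emeasure_random_index[where P="\<lambda>k \<omega>. P (X 0 \<omega>) (W \<omega>) (partial_sum k \<omega>)"])
  then show ?thesis
    by (simp only: emeasure_N_and[OF P])
qed

definition tail_W :: "real \<Rightarrow> real" where
  "tail_W y = prob {\<omega>\<in>space M. y < W \<omega>}"

definition cdf_sum :: "real \<Rightarrow> real" where
  "cdf_sum y = prob {\<omega>\<in>space M. X 0 \<omega> + W \<omega> \<le> y}"

definition tail_diff :: "real \<Rightarrow> real" where
  "tail_diff y = prob {\<omega>\<in>space M. y < X 0 \<omega> - W \<omega>}"

definition renewal_term :: "real \<Rightarrow> real" where
  "renewal_term y = p * (if y < 0 then cdf_sum y else 0) + (1 - p) * (if y < 0 then 1 else tail_diff y)"

lemma measurable_tails [measurable]:
  "tail_W \<in> borel_measurable borel" "cdf_sum \<in> borel_measurable borel"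
  "tail_diff \<in> borel_measurable borel" "renewal_term \<in> borel_measurable borel"
proof -
  have "mono (\<lambda>y. - tail_W y)" "mono cdf_sum" "mono (\<lambda>y. - tail_diff y)"
    unfolding mono_def tail_W_def cdf_sum_def tail_diff_def
    by (auto intro!: finite_measure_mono)
  then have "(\<lambda>y. - tail_W y) \<in> borel_measurable borel" "cdf_sum \<in> borel_measurable borel"
    "(\<lambda>y. - tail_diff y) \<in> borel_measurable borel"
    by (metis borel_measurable_mono)+
  then show "tail_W \<in> borel_measurable borel" "cdf_sum \<in> borel_measurable borel"
    "tail_diff \<in> borel_measurable borel"
    by simp_all
  then show "renewal_term \<in> borel_measurable borel"
    unfolding renewal_term_def[abs_def] by measurable
qed

lemma renewal_term_nonneg: "0 \<le> renewal_term y"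
  using p unfolding renewal_term_def cdf_sum_def tail_diff_def by auto

lemma AE_Y_sign: "AE \<omega> in M. Y \<omega> = 1 \<or> Y \<omega> = -1"
proof -
  have "prob ({\<omega> \<in> space M. Y \<omega> = 1} \<union> {\<omega> \<in> space M. Y \<omega> = -1}) = 1"
    by (subst finite_measure_Union) (auto simp: Y1 Ym1)
  from AE_prob_1[OF this] show ?thesis
    by eventually_elim auto
qed

lemma prob_Y_and:
  fixes f :: "real \<Rightarrow> real \<Rightarrow> real"
  assumes [measurable]: "case_prod f \<in> borel_measurable (borel \<Otimes>\<^sub>M borel)"
  shows "prob {\<omega>\<in>space M. Y \<omega> = c \<and> y < f (W \<omega>) (X 0 \<omega>)} =
    prob {\<omega>\<in>space M. Y \<omega> = c} * prob {\<omega>\<in>space M. y < f (W \<omega>) (X 0 \<omega>)}"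
  using prob_indep_random_variable[OF indep_Y, of f "{c}" "{y<..}"] by simp

lemma tail_W_mixture:
  "tail_W y = p * prob {\<omega>\<in>space M. y < max 0 (W \<omega> + X 0 \<omega>)}
    + (1 - p) * prob {\<omega>\<in>space M. y < max 0 (X 0 \<omega> - W \<omega>)}"
proof -
  have "tail_W y = measure (distr M borel W) {y<..}"
    unfolding tail_W_def by (subst measure_distr) (auto intro!: arg_cong[where f=prob])
  also have "\<dots> = measure (distr M borel (\<lambda>\<omega>. max 0 (Y \<omega> * W \<omega> + X 0 \<omega>))) {y<..}"
    by (simp add: stat)
  also have "\<dots> = prob {\<omega>\<in>space M. y < max 0 (Y \<omega> * W \<omega> + X 0 \<omega>)}"
    by (subst measure_distr) (auto intro!: arg_cong[where f=prob])
  also have "\<dots> = prob ({\<omega>\<in>space M. Y \<omega> = 1 \<and> y < max 0 (W \<omega> + X 0 \<omega>)} \<union>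
      {\<omega>\<in>space M. Y \<omega> = -1 \<and> y < max 0 (X 0 \<omega> - W \<omega>)})"
    by (rule finite_measure_eq_AE) (use AE_Y_sign in \<open>auto elim!: AE_mp\<close>)
  also have "\<dots> = prob {\<omega>\<in>space M. Y \<omega> = 1 \<and> y < max 0 (W \<omega> + X 0 \<omega>)} +
      prob {\<omega>\<in>space M. Y \<omega> = -1 \<and> y < max 0 (X 0 \<omega> - W \<omega>)}"
    by (rule finite_measure_Union) auto
  also have "\<dots> = p * prob {\<omega>\<in>space M. y < max 0 (W \<omega> + X 0 \<omega>)}
      + (1 - p) * prob {\<omega>\<in>space M. y < max 0 (X 0 \<omega> - W \<omega>)}"
    using prob_Y_and[of "\<lambda>w x. max 0 (w + x)"] prob_Y_and[of "\<lambda>w x. max 0 (x - w)"]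
    by (simp add: Y1 Ym1)
  finally show ?thesis .
qed

lemma prob_max_sum:
  "prob {\<omega>\<in>space M. y < max 0 (W \<omega> + X 0 \<omega>)} =
    prob {\<omega>\<in>space M. y < W \<omega> + X 0 \<omega>} + (if y < 0 then cdf_sum y else 0)"
proof (cases "y < 0")
  case True
  have "prob (space M - {\<omega>\<in>space M. y < W \<omega> + X 0 \<omega>}) = 1 - prob {\<omega>\<in>space M. y < W \<omega> + X 0 \<omega>}"
    by (rule prob_compl) auto
  moreover have "space M - {\<omega>\<in>space M. y < W \<omega> + X 0 \<omega>} = {\<omega>\<in>space M. X 0 \<omega> + W \<omega> \<le> y}"
    by auto
  moreover have "{\<omega>\<in>space M. y < max 0 (W \<omega> + X 0 \<omega>)} = space M"
    using True by auto
  ultimately show ?thesis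
    using True by (simp add: cdf_sum_def prob_space[symmetric])
next
  case False
  then have "{\<omega>\<in>space M. y < max 0 (W \<omega> + X 0 \<omega>)} = {\<omega>\<in>space M. y < W \<omega> + X 0 \<omega>}"
    by auto
  with False show ?thesis by simp
qed

lemma prob_max_diff:
  "prob {\<omega>\<in>space M. y < max 0 (X 0 \<omega> - W \<omega>)} = (if y < 0 then 1 else tail_diff y)"
proof (cases "y < 0")
  case True
  then have "{\<omega>\<in>space M. y < max 0 (X 0 \<omega> - W \<omega>)} = space M"
    by auto
  with True show ?thesis by (simp add: prob_space[symmetric])
next
  case False
  then have "{\<omega>\<in>space M. y < max 0 (X 0 \<omega> - W \<omega>)} = {\<omega>\<in>space M. y < X 0 \<omega> - W \<omega>}"
    by auto
  with False show ?thesis by (simp add: tail_diff_def)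
qed

lemma tail_W_stationary: "tail_W y = p * prob {\<omega>\<in>space M. y < W \<omega> + X 0 \<omega>} + renewal_term y"
  unfolding tail_W_mixture prob_max_sum prob_max_diff renewal_term_def by (simp add: algebra_simps)

lemma nn_integral_X:
  assumes [measurable]: "f \<in> borel_measurable borel"
  shows "(\<integral>\<^sup>+\<omega>. f (X n \<omega>) \<partial>M) = (\<integral>\<^sup>+\<omega>. f (X 0 \<omega>) \<partial>M)"
proof -
  have "(\<integral>\<^sup>+\<omega>. f (X n \<omega>) \<partial>M) = (\<integral>\<^sup>+t. f t \<partial>distr M borel (X n))"
    by (simp add: nn_integral_distr)
  also have "\<dots> = (\<integral>\<^sup>+\<omega>. f (X 0 \<omega>) \<partial>M)"
    by (simp add: ident[of n] nn_integral_distr)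
  finally show ?thesis .
qed

lemma tail_W_renewal_equation:
  "ennreal (tail_W y) = ennreal p * (\<integral>\<^sup>+\<omega>. ennreal (tail_W (y - X n \<omega>)) \<partial>M) + ennreal (renewal_term y)"
proof -
  have "ennreal (prob {\<omega>\<in>space M. y < W \<omega> + X 0 \<omega>}) = emeasure M {\<omega>\<in>space M. y < W \<omega> + X 0 \<omega>}"
    by (simp add: emeasure_eq_measure)
  also have "\<dots> = (\<integral>\<^sup>+\<omega>. emeasure M {\<omega>'\<in>space M. y < W \<omega>' + X 0 \<omega>} \<partial>M)"
    by (rule emeasure_indep_var[OF indep_W_X0]) measurable
  also have "\<dots> = (\<integral>\<^sup>+\<omega>. ennreal (tail_W (y - X 0 \<omega>)) \<partial>M)"
  proof (intro nn_integral_cong)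
    fix \<omega>
    have "{\<omega>'\<in>space M. y < W \<omega>' + X 0 \<omega>} = {\<omega>'\<in>space M. y - X 0 \<omega> < W \<omega>'}"
      by auto
    then show "emeasure M {\<omega>'\<in>space M. y < W \<omega>' + X 0 \<omega>} = ennreal (tail_W (y - X 0 \<omega>))"
      by (simp add: tail_W_def emeasure_eq_measure)
  qed
  also have "\<dots> = (\<integral>\<^sup>+\<omega>. ennreal (tail_W (y - X n \<omega>)) \<partial>M)"
    by (rule nn_integral_X[symmetric]) measurable
  finally show ?thesis
    using p renewal_term_nonneg
    by (simp add: tail_W_stationary[of y] ennreal_plus ennreal_mult)
qed

lemma tail_W_series:
  "ennreal (tail_W x) = (\<Sum>k. ennreal p ^ k * (\<integral>\<^sup>+\<omega>. ennreal (renewal_term (x - partial_sum k \<omega>)) \<partial>M))"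
proof -
  define Q where "Q k = (\<integral>\<^sup>+\<omega>. ennreal (tail_W (x - partial_sum k \<omega>)) \<partial>M)" for k
  have step: "Q k = ennreal p * Q (Suc k) + (\<integral>\<^sup>+\<omega>. ennreal (renewal_term (x - partial_sum k \<omega>)) \<partial>M)" for k
  proof -
    have "Q k = (\<integral>\<^sup>+\<omega>. ennreal p * (\<integral>\<^sup>+\<omega>'. ennreal (tail_W (x - partial_sum k \<omega> - X (Suc k) \<omega>')) \<partial>M)
        + ennreal (renewal_term (x - partial_sum k \<omega>)) \<partial>M)"
      unfolding Q_def by (intro nn_integral_cong tail_W_renewal_equation)
    also have "\<dots> = ennreal p * (\<integral>\<^sup>+\<omega>. (\<integral>\<^sup>+\<omega>'. ennreal (tail_W (x - partial_sum k \<omega> - X (Suc k) \<omega>')) \<partial>M) \<partial>M)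
        + (\<integral>\<^sup>+\<omega>. ennreal (renewal_term (x - partial_sum k \<omega>)) \<partial>M)"
      by (simp add: nn_integral_add nn_integral_cmult)
    also have "(\<integral>\<^sup>+\<omega>. (\<integral>\<^sup>+\<omega>'. ennreal (tail_W (x - partial_sum k \<omega> - X (Suc k) \<omega>')) \<partial>M) \<partial>M) =
        (\<integral>\<^sup>+\<omega>. ennreal (tail_W (x - partial_sum k \<omega> - X (Suc k) \<omega>)) \<partial>M)"
      by (rule nn_integral_indep_var[OF indep_X_partial_sum, where f="\<lambda>a s. ennreal (tail_W (x - s - a))", symmetric])
        measurable
    also have "\<dots> = Q (Suc k)"
      unfolding Q_def partial_sum_Suc by (simp add: diff_diff_eq)
    finally show ?thesis .
  qed
  have bounded: "Q k \<le> 1" for k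
  proof -
    have "Q k \<le> (\<integral>\<^sup>+\<omega>. 1 \<partial>M)"
      unfolding Q_def tail_W_def by (intro nn_integral_mono) auto
    then show ?thesis by (simp add: emeasure_space_1)
  qed
  have "Q 0 = (\<Sum>k. ennreal p ^ k * (\<integral>\<^sup>+\<omega>. ennreal (renewal_term (x - partial_sum k \<omega>)) \<partial>M))"
    by (rule ennreal_eq_geometric_series[where B=1 and Q=Q and c=p, OF step bounded _ p]) simp
  then show ?thesis
    by (simp add: Q_def partial_sum_def emeasure_space_1)
qed

lemma emeasure_sum_partial_sum:
  "emeasure M {\<omega>\<in>space M. X 0 \<omega> + W \<omega> + partial_sum k \<omega> \<le> x \<and> x < partial_sum k \<omega>} =
    (\<integral>\<^sup>+\<omega>. (if x < partial_sum k \<omega> then ennreal (cdf_sum (x - partial_sum k \<omega>)) else 0) \<partial>M)"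
proof -
  have "emeasure M {\<omega>\<in>space M. X 0 \<omega> + W \<omega> + partial_sum k \<omega> \<le> x \<and> x < partial_sum k \<omega>} =
      (\<integral>\<^sup>+\<omega>. emeasure M {\<omega>'\<in>space M. X 0 \<omega>' + W \<omega>' + partial_sum k \<omega> \<le> x \<and> x < partial_sum k \<omega>} \<partial>M)"
    by (rule emeasure_indep_var[OF indep_partial_sum[of "(+)"], where P="\<lambda>u s. u + s \<le> x \<and> x < s"]) measurable
  also have "\<dots> = (\<integral>\<^sup>+\<omega>. (if x < partial_sum k \<omega> then ennreal (cdf_sum (x - partial_sum k \<omega>)) else 0) \<partial>M)"
  proof (intro nn_integral_cong)
    fix \<omega>
    show "emeasure M {\<omega>'\<in>space M. X 0 \<omega>' + W \<omega>' + partial_sum k \<omega> \<le> x \<and> x < partial_sum k \<omega>} =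
        (if x < partial_sum k \<omega> then ennreal (cdf_sum (x - partial_sum k \<omega>)) else 0)"
      by (cases "x < partial_sum k \<omega>")
        (auto simp: cdf_sum_def emeasure_eq_measure le_diff_eq intro!: arg_cong[where f="\<lambda>A. ennreal (prob A)"])
  qed
  finally show ?thesis .
qed

lemma emeasure_diff_partial_sum:
  "emeasure M {\<omega>\<in>space M. x < X 0 \<omega> - W \<omega> + partial_sum k \<omega> \<and> partial_sum k \<omega> \<le> x} =
    (\<integral>\<^sup>+\<omega>. (if x < partial_sum k \<omega> then 0 else ennreal (tail_diff (x - partial_sum k \<omega>))) \<partial>M)"
proof -
  have "emeasure M {\<omega>\<in>space M. x < X 0 \<omega> - W \<omega> + partial_sum k \<omega> \<and> partial_sum k \<omega> \<le> x} =
      (\<integral>\<^sup>+\<omega>. emeasure M {\<omega>'\<in>space M. x < X 0 \<omega>' - W \<omega>' + partial_sum k \<omega> \<and> partial_sum k \<omega> \<le> x} \<partial>M)"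
    by (rule emeasure_indep_var[OF indep_partial_sum[of "(-)"], where P="\<lambda>u s. x < u + s \<and> s \<le> x"]) measurable
  also have "\<dots> = (\<integral>\<^sup>+\<omega>. (if x < partial_sum k \<omega> then 0 else ennreal (tail_diff (x - partial_sum k \<omega>))) \<partial>M)"
  proof (intro nn_integral_cong)
    fix \<omega>
    show "emeasure M {\<omega>'\<in>space M. x < X 0 \<omega>' - W \<omega>' + partial_sum k \<omega> \<and> partial_sum k \<omega> \<le> x} =
        (if x < partial_sum k \<omega> then 0 else ennreal (tail_diff (x - partial_sum k \<omega>)))"
      by (cases "x < partial_sum k \<omega>")
        (auto simp: tail_diff_def emeasure_eq_measure diff_less_eq intro!: arg_cong[where f="\<lambda>A. ennreal (prob A)"])
  qed
  finally show ?thesis .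
qed

lemma nn_integral_renewal_term:
  "(\<integral>\<^sup>+\<omega>. ennreal (renewal_term (x - partial_sum k \<omega>)) \<partial>M) =
      ennreal (1 - p) * emeasure M {\<omega>\<in>space M. x < partial_sum k \<omega>}
    + ennreal p * emeasure M {\<omega>\<in>space M. X 0 \<omega> + W \<omega> + partial_sum k \<omega> \<le> x \<and> x < partial_sum k \<omega>}
    + ennreal (1 - p) * emeasure M {\<omega>\<in>space M. x < X 0 \<omega> - W \<omega> + partial_sum k \<omega> \<and> partial_sum k \<omega> \<le> x}"
proof -
  have "ennreal (renewal_term (x - s)) = ennreal (1 - p) * of_bool (x < s)
      + ennreal p * (if x < s then ennreal (cdf_sum (x - s)) else 0)
      + ennreal (1 - p) * (if x < s then 0 else ennreal (tail_diff (x - s)))" for s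
    using p unfolding renewal_term_def cdf_sum_def tail_diff_def by (auto simp: ennreal_plus ennreal_mult)
  then show ?thesis
    unfolding emeasure_sum_partial_sum emeasure_diff_partial_sum
    by (simp add: nn_integral_add nn_integral_cmult nn_integral_of_bool)
qed

theorem tail_W_eq:
  "prob {\<omega>\<in>space M. x < W \<omega>} =
      prob {\<omega>\<in>space M. x < partial_sum (N \<omega>) \<omega>}
    + p / (1 - p) * prob {\<omega>\<in>space M. X 0 \<omega> + W \<omega> + partial_sum (N \<omega>) \<omega> \<le> x \<and> x < partial_sum (N \<omega>) \<omega>}
    + prob {\<omega>\<in>space M. x < X 0 \<omega> - W \<omega> + partial_sum (N \<omega>) \<omega> \<and> partial_sum (N \<omega>) \<omega> \<le> x}"
    (is "_ = ?rhs")
proof -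
  define e1 where "e1 k = emeasure M {\<omega>\<in>space M. x < partial_sum k \<omega>}" for k
  define e2 where "e2 k = emeasure M {\<omega>\<in>space M. X 0 \<omega> + W \<omega> + partial_sum k \<omega> \<le> x \<and> x < partial_sum k \<omega>}" for k
  define e3 where "e3 k = emeasure M {\<omega>\<in>space M. x < X 0 \<omega> - W \<omega> + partial_sum k \<omega> \<and> partial_sum k \<omega> \<le> x}" for k
  define q where "q k = ennreal ((1 - p) * p ^ k)" for k
  have "ennreal (tail_W x) = (\<Sum>k. ennreal p ^ k * (ennreal (1 - p) * e1 k + ennreal p * e2 k + ennreal (1 - p) * e3 k))"
    unfolding tail_W_series nn_integral_renewal_term e1_def e2_def e3_def ..
  also have "\<dots> = (\<Sum>k. q k * e1 k + ennreal (p / (1 - p)) * (q k * e2 k) + q k * e3 k)"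
    unfolding q_def using p by (simp only: ennreal_geometric_weights)
  also have "\<dots> = (\<Sum>k. q k * e1 k) + ennreal (p / (1 - p)) * (\<Sum>k. q k * e2 k) + (\<Sum>k. q k * e3 k)"
    by (simp add: suminf_add[OF summableI summableI, symmetric])
  also have "\<dots> = emeasure M {\<omega>\<in>space M. x < partial_sum (N \<omega>) \<omega>}
    + ennreal (p / (1 - p)) * emeasure M {\<omega>\<in>space M. X 0 \<omega> + W \<omega> + partial_sum (N \<omega>) \<omega> \<le> x \<and> x < partial_sum (N \<omega>) \<omega>}
    + emeasure M {\<omega>\<in>space M. x < X 0 \<omega> - W \<omega> + partial_sum (N \<omega>) \<omega> \<and> partial_sum (N \<omega>) \<omega> \<le> x}"
    unfolding q_def e1_def e2_def e3_def
    using emeasure_at_N[where P="\<lambda>u v s. x < s"] emeasure_at_N[where P="\<lambda>u v s. u + v + s \<le> x \<and> x < s"]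
      emeasure_at_N[where P="\<lambda>u v s. x < u - v + s \<and> s \<le> x"]
    by simp
  also have "\<dots> = ennreal ?rhs"
    using p by (simp add: emeasure_eq_measure ennreal_plus ennreal_mult del: times_divide_eq_left)
  finally have "ennreal (tail_W x) = ennreal ?rhs" .
  moreover have "0 \<le> ?rhs"
    using p by (intro add_nonneg_nonneg mult_nonneg_nonneg divide_nonneg_nonneg) auto
  ultimately show ?thesis
    by (simp add: tail_W_def)
qed

end

theorem lemma5p1:
  fixes M :: "'a measure"
    and X :: "nat \<Rightarrow> 'a \<Rightarrow> real" and Y W :: "'a \<Rightarrow> real" and N :: "'a \<Rightarrow> nat"
    and p \<gamma> :: real
  assumes "prob_space M"
    and indep: "prob_space.indep_vars M (\<lambda>_. borel) (rv_family X Y W N) UNIV"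
    and ident: "\<And>n. distr M borel (X n) = distr M borel (X 0)"
    and nonlattice: "\<not> lattice_distr (distr M borel (X 0))"
    and negpart: "measure M {\<omega> \<in> space M. X 0 \<omega> < 0} > 0"
    and p: "0 \<le> p" "p < 1"
    and Y1: "measure M {\<omega> \<in> space M. Y \<omega> = 1} = p"
    and Ym1: "measure M {\<omega> \<in> space M. Y \<omega> = -1} = 1 - p"
    and \<gamma>: "\<gamma> > 0"
    and S: "class_S \<gamma> (distr M borel (X 0))"
    and mgf: "p * (\<integral>\<omega>. exp (\<gamma> * X 0 \<omega>) \<partial>M) < 1"
    and stat: "distr M borel W = distr M borel (\<lambda>\<omega>. max 0 (Y \<omega> * W \<omega> + X 0 \<omega>))"
    and Ngeo: "\<And>k. measure M {\<omega> \<in> space M. N \<omega> = k} = (1 - p) * p ^ k"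
  shows "\<forall>x. measure M {\<omega> \<in> space M. W \<omega> > x} =
      measure M {\<omega> \<in> space M. (\<Sum>i\<in>{1..N \<omega>}. X i \<omega>) > x}
    + p / (1 - p) * measure M {\<omega> \<in> space M.
          X 0 \<omega> + W \<omega> + (\<Sum>i\<in>{1..N \<omega>}. X i \<omega>) \<le> x \<and> (\<Sum>i\<in>{1..N \<omega>}. X i \<omega>) > x}
    + measure M {\<omega> \<in> space M.
          X 0 \<omega> - W \<omega> + (\<Sum>i\<in>{1..N \<omega>}. X i \<omega>) > x \<and> (\<Sum>i\<in>{1..N \<omega>}. X i \<omega>) \<le> x}"
proof -
  interpret stationary_signed_lindley M X Y W N p
    by (intro stationary_signed_lindley.intro stationary_signed_lindley_axioms.intro)
      (fact assms)+
  show ?thesis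
    using tail_W_eq by (simp add: partial_sum_def)
qed

end
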